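(* In the single-hop model described in the context, $$P_s\le 1-(pq+1-p)^{D+1},\qquad\text{where } q:=P(SIR_1<\beta).$$
   Context: Single-hop model. Fix $\alpha>2$, $\beta>0$, $d>0$, $p\in(0,1]$, $\lambda>0$ and an integer $D\ge 0$. Let $\Phi$ be a homogeneous Poisson point process on $\mathbb{R}^2$ of intensity $\lambda$ (the same realization in every time slot); the typical receiver is at the origin and its transmitter at distance $d$. For each time slot $t\in\{1,2,\dots\}$ and each $x\in\Phi$ let $\mathbf 1_{x,t}\sim\mathrm{Bernoulli}(p)$, $G_{x,t}\sim\mathrm{Exp}(1)$, $H_t\sim\mathrm{Exp}(1)$, and $A_t\sim\mathrm{Bernoulli}(p)$, all mutually independent and independent of $\Phi$. Define $SIR_t:=\dfrac{d^{-\alpha}H_t}{\sum_{x\in\Phi}\mathbf 1_{x,t}|x|^{-\alpha}G_{x,t}}$ and $P_s:=P(\exists\, t\le D+1:\ A_t=1,\ SIR_t\ge\beta)$. *)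

theory Defs
  imports "HOL-Probability.Probability"
begin

text \<open>Points of the PPP are given by a (random) enumeration X n, n :: nat, of the
  points of \<Phi> in the plane (real^2).  Counting measure of \<Phi> on a set B.\<close>

definition pp_count :: "(nat \<Rightarrow> 'w \<Rightarrow> real^2) \<Rightarrow> (real^2) set \<Rightarrow> 'w \<Rightarrow> nat" where
  "pp_count X B \<omega> = card {n. X n \<omega> \<in> B}"

definition poisson_pp :: "'w measure \<Rightarrow> real \<Rightarrow> (nat \<Rightarrow> 'w \<Rightarrow> real^2) \<Rightarrow> bool" where
  "poisson_pp M lam X \<longleftrightarrow>
     (\<forall>n. X n \<in> borel_measurable M) \<and>
     (\<forall>B \<in> sets lborel. bounded B \<longrightarrow>
        (\<forall>k::nat. measure M {\<omega> \<in> space M. finite {n. X n \<omega> \<in> B} \<and> pp_count X B \<omega> = k}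
           = exp (- (lam * measure lborel B)) * (lam * measure lborel B) ^ k / fact k)) \<and>
     (\<forall>(J::nat set) B. finite J \<longrightarrow> disjoint_family_on B J \<longrightarrow>
        (\<forall>j\<in>J. B j \<in> sets lborel \<and> bounded (B j)) \<longrightarrow>
        prob_space.indep_vars M (\<lambda>_. count_space UNIV) (\<lambda>j. pp_count X (B j)) J)"

datatype mark_idx = MInd nat nat | MG nat nat | MH nat | MA nat

definition mark_vec ::
  "(nat \<Rightarrow> nat \<Rightarrow> 'w \<Rightarrow> bool) \<Rightarrow> (nat \<Rightarrow> nat \<Rightarrow> 'w \<Rightarrow> real) \<Rightarrow> (nat \<Rightarrow> 'w \<Rightarrow> real)
     \<Rightarrow> (nat \<Rightarrow> 'w \<Rightarrow> bool) \<Rightarrow> mark_idx \<Rightarrow> 'w \<Rightarrow> real" where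
  "mark_vec Ind G H A i \<omega> = (case i of
       MInd n t \<Rightarrow> of_bool (Ind n t \<omega>)
     | MG n t \<Rightarrow> G n t \<omega>
     | MH t \<Rightarrow> H t \<omega>
     | MA t \<Rightarrow> of_bool (A t \<omega>))"

definition indep_rv :: "'w measure \<Rightarrow> 'a measure \<Rightarrow> ('w \<Rightarrow> 'a) \<Rightarrow> 'b measure \<Rightarrow> ('w \<Rightarrow> 'b) \<Rightarrow> bool" where
  "indep_rv M Ma Y Mb Z \<longleftrightarrow> Y \<in> measurable M Ma \<and> Z \<in> measurable M Mb \<and>
     prob_space.indep_set M {Y -` S \<inter> space M | S. S \<in> sets Ma} {Z -` S \<inter> space M | S. S \<in> sets Mb}"

definition bernoulli_rv :: "'w measure \<Rightarrow> real \<Rightarrow> ('w \<Rightarrow> bool) \<Rightarrow> bool" where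
  "bernoulli_rv M p Y \<longleftrightarrow> Y \<in> measurable M (count_space UNIV) \<and>
     measure M {\<omega> \<in> space M. Y \<omega>} = p"

definition exp1_rv :: "'w measure \<Rightarrow> ('w \<Rightarrow> real) \<Rightarrow> bool" where
  "exp1_rv M Y \<longleftrightarrow> distributed M lborel Y (exponential_density 1)"

definition interference ::
  "real \<Rightarrow> (nat \<Rightarrow> 'w \<Rightarrow> real^2) \<Rightarrow> (nat \<Rightarrow> nat \<Rightarrow> 'w \<Rightarrow> bool) \<Rightarrow> (nat \<Rightarrow> nat \<Rightarrow> 'w \<Rightarrow> real)
     \<Rightarrow> nat \<Rightarrow> 'w \<Rightarrow> ennreal" where
  "interference \<alpha> X Ind G t \<omega> =
     (\<Sum>n. ennreal (of_bool (Ind n t \<omega>) * norm (X n \<omega>) powr (- \<alpha>) * G n t \<omega>))"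

definition SIR ::
  "real \<Rightarrow> real \<Rightarrow> (nat \<Rightarrow> 'w \<Rightarrow> real^2) \<Rightarrow> (nat \<Rightarrow> nat \<Rightarrow> 'w \<Rightarrow> bool) \<Rightarrow> (nat \<Rightarrow> nat \<Rightarrow> 'w \<Rightarrow> real)
     \<Rightarrow> (nat \<Rightarrow> 'w \<Rightarrow> real) \<Rightarrow> nat \<Rightarrow> 'w \<Rightarrow> ennreal" where
  "SIR \<alpha> d X Ind G H t \<omega> = ennreal (d powr (- \<alpha>) * H t \<omega>) / interference \<alpha> X Ind G t \<omega>"

end

theory Submission
  imports Defs
begin

(*
  Write \<omega> \<mapsto> (x, m) for the pair "point configuration of \<Phi>" and "vector of all marks"
  (activity indicators, fading gains and the Bernoulli attempt variables).  The two
  components are independent, so by Fubini every event E in the pair has probability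
  P(E) = \<integral> P(E_x) dP_\<Phi>(x), where E_x is the section at a fixed configuration x.

  For a fixed configuration x the marks of different time slots are independent and
  identically distributed, hence slot t fails (no attempt, or SIR below \<beta>) with the same
  probability g(x) for every t, and all D+1 slots fail with probability g(x)^(D+1).
  Moreover g(x) = (1 - p) + p q(x), where q(x) = P(SIR_1 < \<beta> | \<Phi> = x), because A_1 is
  independent of the remaining slot-1 marks.  Integrating over x and applying Jensen's
  inequality E[g^(D+1)] \<ge> E[g]^(D+1) with E[g] = (1 - p) + p q gives the bound.
*)

section \<open>Jensen's inequality for powers of [0,1]-valued variables\<close>

lemma tangent_line_below_power:
  fixes x a :: real
  assumes "0 \<le> x" "0 \<le> a"
  shows "a ^ n + real n * a ^ (n - 1) * (x - a) \<le> x ^ n"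
proof (induction n)
  case 0
  then show ?case by simp
next
  case (Suc n)
  have "a ^ Suc n + real (Suc n) * a ^ n * (x - a) \<le> x * (a ^ n + real n * a ^ (n - 1) * (x - a))"
  proof (cases n)
    case 0
    then show ?thesis by (simp add: algebra_simps)
  next
    case (Suc k)
    have "0 \<le> real n * a ^ k * ((x - a) * (x - a))"
      using assms by (intro mult_nonneg_nonneg zero_le_square) auto
    then show ?thesis using Suc by (simp add: algebra_simps power2_eq_square)
  qed
  also have "\<dots> \<le> x * x ^ n"
    using Suc.IH assms by (intro mult_left_mono) auto
  finally show ?case by simp
qed

text \<open>Jensen's inequality \<open>E[g]^n \<le> E[g^n]\<close>, obtained by integrating the tangent line at \<open>E[g]\<close>.\<close>

lemma (in prob_space) power_expectation_le:
  fixes g :: "'a \<Rightarrow> real"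
  assumes g[measurable]: "g \<in> borel_measurable M"
    and bounds: "\<And>x. x \<in> space M \<Longrightarrow> 0 \<le> g x \<and> g x \<le> 1"
  shows "(expectation g) ^ n \<le> expectation (\<lambda>x. g x ^ n)"
proof -
  define a where "a = expectation g"
  have int_g: "integrable M g"
    using bounds by (intro integrable_const_bound[where B=1]) auto
  have "0 \<le> a"
    unfolding a_def using bounds by (intro integral_nonneg_AE) auto
  have "expectation (\<lambda>x. a ^ n + real n * a ^ (n - 1) * (g x - a)) \<le> expectation (\<lambda>x. g x ^ n)"
  proof (rule integral_mono)
    show "integrable M (\<lambda>x. a ^ n + real n * a ^ (n - 1) * (g x - a))"
      using int_g by simp
    show "integrable M (\<lambda>x. g x ^ n)"
      using bounds by (intro integrable_const_bound[where B=1]) (auto intro!: power_le_one)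
    show "a ^ n + real n * a ^ (n - 1) * (g x - a) \<le> g x ^ n" if "x \<in> space M" for x
      using bounds[OF that] \<open>0 \<le> a\<close> tangent_line_below_power by blast
  qed
  moreover have "expectation (\<lambda>x. a ^ n + real n * a ^ (n - 1) * (g x - a)) = a ^ n"
    using int_g by (simp add: a_def prob_space)
  ultimately show ?thesis by (simp add: a_def)
qed

section \<open>Sections of a pair of independent random elements\<close>

lemma (in prob_space) indep_rv_joint_distr:
  assumes "indep_rv M N1 Y N2 Z"
  shows "distr M (N1 \<Otimes>\<^sub>M N2) (\<lambda>\<omega>. (Y \<omega>, Z \<omega>)) = distr M N1 Y \<Otimes>\<^sub>M distr M N2 Z"
proof (rule pair_measure_eqI[symmetric])
  have [measurable]: "Y \<in> measurable M N1" "Z \<in> measurable M N2"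
    using assms by (auto simp: indep_rv_def)
  have indep: "indep_set {Y -` S \<inter> space M | S. S \<in> sets N1} {Z -` S \<inter> space M | S. S \<in> sets N2}"
    using assms by (simp add: indep_rv_def)
  show "sigma_finite_measure (distr M N1 Y)" "sigma_finite_measure (distr M N2 Z)"
    by (simp_all add: prob_space_distr prob_space_imp_sigma_finite)
  show "sets (distr M N1 Y \<Otimes>\<^sub>M distr M N2 Z) = sets (distr M (N1 \<Otimes>\<^sub>M N2) (\<lambda>\<omega>. (Y \<omega>, Z \<omega>)))"
    using sets_pair_measure_cong[of "distr M N1 Y" N1 "distr M N2 Z" N2] by simp
  fix S T assume "S \<in> sets (distr M N1 Y)" and "T \<in> sets (distr M N2 Z)"
  then have [measurable]: "S \<in> sets N1" "T \<in> sets N2" by simp_all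
  have "emeasure (distr M (N1 \<Otimes>\<^sub>M N2) (\<lambda>\<omega>. (Y \<omega>, Z \<omega>))) (S \<times> T)
      = emeasure M ((Y -` S \<inter> space M) \<inter> (Z -` T \<inter> space M))"
    by (subst emeasure_distr) (auto intro!: arg_cong[where f="emeasure M"])
  also have "prob ((Y -` S \<inter> space M) \<inter> (Z -` T \<inter> space M)) = prob (Y -` S \<inter> space M) * prob (Z -` T \<inter> space M)"
    by (rule indep_setD[OF indep]) auto
  then have "emeasure M ((Y -` S \<inter> space M) \<inter> (Z -` T \<inter> space M))
      = emeasure M (Y -` S \<inter> space M) * emeasure M (Z -` T \<inter> space M)"
    by (simp add: emeasure_eq_measure ennreal_mult)
  also have "\<dots> = emeasure (distr M N1 Y) S * emeasure (distr M N2 Z) T"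
    by (simp add: emeasure_distr)
  finally show "emeasure (distr M N1 Y) S * emeasure (distr M N2 Z) T
      = emeasure (distr M (N1 \<Otimes>\<^sub>M N2) (\<lambda>\<omega>. (Y \<omega>, Z \<omega>))) (S \<times> T)" ..
qed

text \<open>Fubini for an independent pair: an event of the pair has the probability obtained by
  freezing the first component and averaging over its law.\<close>

lemma (in prob_space) indep_rv_sections:
  assumes indep: "indep_rv M N1 Y N2 Z" and S: "S \<in> sets (N1 \<Otimes>\<^sub>M N2)"
  shows "(\<lambda>x. prob {\<omega> \<in> space M. (x, Z \<omega>) \<in> S}) \<in> borel_measurable (distr M N1 Y)"
    and "prob {\<omega> \<in> space M. (Y \<omega>, Z \<omega>) \<in> S}
           = (\<integral>x. prob {\<omega> \<in> space M. (x, Z \<omega>) \<in> S} \<partial>distr M N1 Y)"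
proof -
  have [measurable]: "Y \<in> measurable M N1" "Z \<in> measurable M N2"
    using indep by (auto simp: indep_rv_def)
  define PY where "PY = distr M N1 Y"
  define PZ where "PZ = distr M N2 Z"
  interpret PY: prob_space PY unfolding PY_def by (rule prob_space_distr) simp
  interpret PZ: prob_space PZ unfolding PZ_def by (rule prob_space_distr) simp
  have sets_PYZ: "sets (PY \<Otimes>\<^sub>M PZ) = sets (N1 \<Otimes>\<^sub>M N2)"
    using sets_pair_measure_cong[of PY N1 PZ N2] by (simp add: PY_def PZ_def)
  have section_prob: "prob {\<omega> \<in> space M. (x, Z \<omega>) \<in> S} = measure PZ (Pair x -` S)" for x
  proof -
    have "Pair x -` S \<in> sets N2" using S by (rule sets_Pair1)
    then show ?thesis
      unfolding PZ_def by (subst measure_distr) (auto intro!: arg_cong[where f=prob])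
  qed
  have "(\<lambda>x. emeasure PZ (Pair x -` S)) \<in> borel_measurable PY"
    using S sets_PYZ by (intro PZ.measurable_emeasure_Pair) simp
  then have section_measurable: "(\<lambda>x. measure PZ (Pair x -` S)) \<in> borel_measurable PY"
    unfolding measure_def by measurable
  then show "(\<lambda>x. prob {\<omega> \<in> space M. (x, Z \<omega>) \<in> S}) \<in> borel_measurable (distr M N1 Y)"
    unfolding section_prob PY_def .
  have "prob {\<omega> \<in> space M. (Y \<omega>, Z \<omega>) \<in> S} = measure (PY \<Otimes>\<^sub>M PZ) S"
    using S unfolding PY_def PZ_def indep_rv_joint_distr[OF indep, symmetric]
    by (subst measure_distr) (auto intro!: arg_cong[where f=prob])
  also have "\<dots> = enn2real (\<integral>\<^sup>+x. emeasure PZ (Pair x -` S) \<partial>PY)"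
    unfolding measure_def using S sets_PYZ by (subst PZ.emeasure_pair_measure_alt) simp_all
  also have "(\<integral>\<^sup>+x. emeasure PZ (Pair x -` S) \<partial>PY) = (\<integral>\<^sup>+x. ennreal (measure PZ (Pair x -` S)) \<partial>PY)"
    by (simp only: PZ.emeasure_eq_measure)
  also have "\<dots> = ennreal (\<integral>x. measure PZ (Pair x -` S) \<partial>PY)"
    using section_measurable
    by (intro nn_integral_eq_integral PY.integrable_const_bound[where B=1]) auto
  finally show "prob {\<omega> \<in> space M. (Y \<omega>, Z \<omega>) \<in> S}
      = (\<integral>x. prob {\<omega> \<in> space M. (x, Z \<omega>) \<in> S} \<partial>distr M N1 Y)"
    unfolding section_prob PY_def by simp
qed

text \<open>If the sections of \<open>C\<close> have the \<open>n\<close>-th power of the probability of the sections of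
  \<open>C1\<close>, then \<open>P(C) \<ge> P(C1)^n\<close>: Jensen's inequality applied to the section probabilities.\<close>

lemma (in prob_space) indep_rv_section_power_bound:
  assumes indep: "indep_rv M N1 Y N2 Z"
    and C: "C \<in> sets (N1 \<Otimes>\<^sub>M N2)" and C1: "C1 \<in> sets (N1 \<Otimes>\<^sub>M N2)"
    and power: "\<And>x. prob {\<omega> \<in> space M. (x, Z \<omega>) \<in> C} = prob {\<omega> \<in> space M. (x, Z \<omega>) \<in> C1} ^ n"
  shows "prob {\<omega> \<in> space M. (Y \<omega>, Z \<omega>) \<in> C1} ^ n \<le> prob {\<omega> \<in> space M. (Y \<omega>, Z \<omega>) \<in> C}"
proof -
  interpret PY: prob_space "distr M N1 Y"
    using indep by (intro prob_space_distr) (simp add: indep_rv_def)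
  have "prob {\<omega> \<in> space M. (Y \<omega>, Z \<omega>) \<in> C1} ^ n
      = (\<integral>x. prob {\<omega> \<in> space M. (x, Z \<omega>) \<in> C1} \<partial>distr M N1 Y) ^ n"
    using indep_rv_sections(2)[OF indep C1] by simp
  also have "\<dots> \<le> (\<integral>x. prob {\<omega> \<in> space M. (x, Z \<omega>) \<in> C1} ^ n \<partial>distr M N1 Y)"
    by (rule PY.power_expectation_le[OF indep_rv_sections(1)[OF indep C1]]) simp
  also have "\<dots> = prob {\<omega> \<in> space M. (Y \<omega>, Z \<omega>) \<in> C}"
    using indep_rv_sections(2)[OF indep C] by (simp add: power)
  finally show ?thesis .
qed

lemma (in prob_space) indep_rv_section_affine:
  assumes indep: "indep_rv M N1 Y N2 Z"
    and C1: "C1 \<in> sets (N1 \<Otimes>\<^sub>M N2)" and C2: "C2 \<in> sets (N1 \<Otimes>\<^sub>M N2)"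
    and affine: "\<And>x. prob {\<omega> \<in> space M. (x, Z \<omega>) \<in> C1} = a + b * prob {\<omega> \<in> space M. (x, Z \<omega>) \<in> C2}"
  shows "prob {\<omega> \<in> space M. (Y \<omega>, Z \<omega>) \<in> C1} = a + b * prob {\<omega> \<in> space M. (Y \<omega>, Z \<omega>) \<in> C2}"
proof -
  interpret PY: prob_space "distr M N1 Y"
    using indep by (intro prob_space_distr) (simp add: indep_rv_def)
  have "integrable (distr M N1 Y) (\<lambda>x. prob {\<omega> \<in> space M. (x, Z \<omega>) \<in> C2})"
    using indep_rv_sections(1)[OF indep C2] by (intro PY.integrable_const_bound[where B=1]) auto
  then show ?thesis
    using indep_rv_sections(2)[OF indep C1] indep_rv_sections(2)[OF indep C2]
    using PY.prob_space by (simp add: affine)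
qed

section \<open>Families of independent random variables\<close>

lemma (in prob_space) indep_vars_prob_blocks:
  fixes Y :: "'i \<Rightarrow> 'a \<Rightarrow> 'b" and P :: "'t \<Rightarrow> ('i \<Rightarrow> 'b) \<Rightarrow> bool"
  assumes indep: "indep_vars (\<lambda>_. N) Y UNIV"
    and "finite T" and disjoint: "disjoint_family_on K T"
    and P_measurable: "\<And>t. t \<in> T \<Longrightarrow> P t \<in> measurable (PiM (K t) (\<lambda>_. N)) (count_space UNIV)"
    and P_local: "\<And>t m. t \<in> T \<Longrightarrow> P t (restrict m (K t)) = P t m"
  shows "prob {\<omega> \<in> space M. \<forall>t\<in>T. P t (\<lambda>i. Y i \<omega>)} = (\<Prod>t\<in>T. prob {\<omega> \<in> space M. P t (\<lambda>i. Y i \<omega>)})"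
proof (cases "T = {}")
  case True
  then show ?thesis by (simp add: prob_space)
next
  case False
  have "indep_vars (\<lambda>t. PiM (K t) (\<lambda>_. N)) (\<lambda>t \<omega>. restrict (\<lambda>i. Y i \<omega>) (K t)) T"
    using indep by (rule indep_vars_restrict) (use disjoint in auto)
  then have "indep_vars (\<lambda>_. count_space UNIV) (\<lambda>t \<omega>. P t (restrict (\<lambda>i. Y i \<omega>) (K t))) T"
    by (rule indep_vars_compose2) (rule P_measurable)
  then have indep_P: "indep_vars (\<lambda>_. count_space UNIV) (\<lambda>t \<omega>. P t (\<lambda>i. Y i \<omega>)) T"
    by (subst (asm) indep_vars_cong[OF refl _ refl]) (simp_all add: P_local)
  have "prob (\<Inter>t\<in>T. (\<lambda>\<omega>. P t (\<lambda>i. Y i \<omega>)) -` {True} \<inter> space M)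
      = (\<Prod>t\<in>T. prob ((\<lambda>\<omega>. P t (\<lambda>i. Y i \<omega>)) -` {True} \<inter> space M))"
    by (rule indep_varsD[OF indep_P]) (use False \<open>finite T\<close> in auto)
  moreover have "(\<Inter>t\<in>T. (\<lambda>\<omega>. P t (\<lambda>i. Y i \<omega>)) -` {True} \<inter> space M) = {\<omega> \<in> space M. \<forall>t\<in>T. P t (\<lambda>i. Y i \<omega>)}"
    using False by auto
  moreover have "(\<lambda>\<omega>. P t (\<lambda>i. Y i \<omega>)) -` {True} \<inter> space M = {\<omega> \<in> space M. P t (\<lambda>i. Y i \<omega>)}" for t
    by auto
  ultimately show ?thesis by simp
qed

lemma (in prob_space) indep_vars_reindex_prob:
  fixes Y :: "'i \<Rightarrow> 'a \<Rightarrow> 'b"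
  assumes indep: "indep_vars (\<lambda>_. N) Y UNIV" and "bij f"
    and same_law: "\<And>i. distr M N (Y (f i)) = distr M N (Y i)"
    and Q: "Q \<in> sets (PiM UNIV (\<lambda>_. N))"
  shows "prob {\<omega> \<in> space M. (\<lambda>i. Y (f i) \<omega>) \<in> Q} = prob {\<omega> \<in> space M. (\<lambda>i. Y i \<omega>) \<in> Q}"
proof -
  define \<mu> where "\<mu> i = distr M N (Y i)" for i
  have [measurable]: "Y i \<in> measurable M N" for i
    using indep by (simp add: indep_vars_def)
  have Y_vec[measurable]: "(\<lambda>\<omega> i. Y i \<omega>) \<in> measurable M (PiM UNIV (\<lambda>_. N))"
    by (rule measurable_PiM_single') (auto intro: measurable_space)
  have law: "distr M (PiM UNIV (\<lambda>_. N)) (\<lambda>\<omega> i. Y i \<omega>) = PiM UNIV \<mu>"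
    using indep indep_vars_iff_distr_eq_PiM[where I=UNIV and M'="\<lambda>_. N" and X=Y]
    by (simp add: \<mu>_def[abs_def] restrict_UNIV)
  have reindex: "(\<lambda>m i. m (f i)) \<in> measurable (PiM UNIV (\<lambda>_. N)) (PiM UNIV (\<lambda>_. N))"
    by (rule measurable_PiM_single') (auto simp: space_PiM)
  have "distr M (PiM UNIV (\<lambda>_. N)) (\<lambda>\<omega> i. Y (f i) \<omega>)
      = distr (distr M (PiM UNIV (\<lambda>_. N)) (\<lambda>\<omega> i. Y i \<omega>)) (PiM UNIV (\<lambda>_. N)) (\<lambda>m i. m (f i))"
    by (subst distr_distr[OF reindex Y_vec]) (simp add: comp_def)
  also have "\<dots> = distr (PiM UNIV \<mu>) (PiM UNIV (\<lambda>i. \<mu> (f i))) (\<lambda>m. \<lambda>i\<in>UNIV. m (f i))"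
    unfolding law by (intro distr_cong) (auto simp: \<mu>_def intro!: sets_PiM_cong)
  also have "\<dots> = PiM UNIV (\<lambda>i. \<mu> (f i))"
    using \<open>bij f\<close> by (intro distr_PiM_reindex) (auto simp: \<mu>_def bij_def prob_space_distr)
  also have "\<dots> = distr M (PiM UNIV (\<lambda>_. N)) (\<lambda>\<omega> i. Y i \<omega>)"
    unfolding law \<mu>_def same_law ..
  finally have laws_eq: "distr M (PiM UNIV (\<lambda>_. N)) (\<lambda>\<omega> i. Y (f i) \<omega>) = distr M (PiM UNIV (\<lambda>_. N)) (\<lambda>\<omega> i. Y i \<omega>)" .
  have "(\<lambda>\<omega> i. Y (f i) \<omega>) \<in> measurable M (PiM UNIV (\<lambda>_. N))"
    by (rule measurable_PiM_single') (auto intro: measurable_space)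
  then have "prob {\<omega> \<in> space M. (\<lambda>i. Y (f i) \<omega>) \<in> Q} = measure (distr M (PiM UNIV (\<lambda>_. N)) (\<lambda>\<omega> i. Y (f i) \<omega>)) Q"
    using Q by (subst measure_distr) (auto intro!: arg_cong[where f=prob])
  also have "\<dots> = prob {\<omega> \<in> space M. (\<lambda>i. Y i \<omega>) \<in> Q}"
    unfolding laws_eq using Q by (subst measure_distr) (auto intro!: arg_cong[where f=prob])
  finally show ?thesis .
qed

lemma (in prob_space) bernoulli_rv_prob:
  assumes "bernoulli_rv M p Z"
  shows "prob {\<omega> \<in> space M. Z \<omega>} = p" and "prob {\<omega> \<in> space M. \<not> Z \<omega>} = 1 - p"
proof -
  have [measurable]: "Z \<in> measurable M (count_space UNIV)"
    using assms by (simp add: bernoulli_rv_def)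
  show "prob {\<omega> \<in> space M. Z \<omega>} = p" using assms by (simp add: bernoulli_rv_def)
  moreover have "{\<omega> \<in> space M. \<not> Z \<omega>} = space M - {\<omega> \<in> space M. Z \<omega>}" by auto
  moreover have "{\<omega> \<in> space M. Z \<omega>} \<in> events" by measurable
  ultimately show "prob {\<omega> \<in> space M. \<not> Z \<omega>} = 1 - p" by (simp add: prob_compl)
qed

lemma (in prob_space) bernoulli_rv_distr_eq:
  assumes Y: "bernoulli_rv M p Y" and Y': "bernoulli_rv M p Y'"
  shows "distr M borel (\<lambda>\<omega>. of_bool (Y \<omega>) :: real) = distr M borel (\<lambda>\<omega>. of_bool (Y' \<omega>))"
proof -
  have [measurable]: "Y \<in> measurable M (count_space UNIV)" "Y' \<in> measurable M (count_space UNIV)"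
    using Y Y' by (auto simp: bernoulli_rv_def)
  have preimage: "(\<lambda>\<omega>. of_bool (Z \<omega>) :: real) -` S \<inter> space M =
     (if 1 \<in> S then (if 0 \<in> S then space M else {\<omega> \<in> space M. Z \<omega>})
      else (if 0 \<in> S then {\<omega> \<in> space M. \<not> Z \<omega>} else {}))" for Z and S :: "real set"
    by (auto simp: of_bool_def split: if_splits)
  show ?thesis
    by (rule measure_eqI)
      (simp_all add: emeasure_distr preimage emeasure_eq_measure bernoulli_rv_prob[OF Y] bernoulli_rv_prob[OF Y'])
qed

lemma exp1_rv_distr_eq:
  assumes "exp1_rv M Y" "exp1_rv M Y'"
  shows "distr M borel Y = distr M borel Y'"
proof -
  have "distr M borel Y = distr M lborel Y" "distr M borel Y' = distr M lborel Y'"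
    by (auto intro!: distr_cong)
  then show ?thesis using assms by (simp add: exp1_rv_def distributed_def)
qed

section \<open>The SIR as a function of the configuration and the marks\<close>

fun slot :: "mark_idx \<Rightarrow> nat" where
  "slot (MInd n s) = s" | "slot (MG n s) = s" | "slot (MH s) = s" | "slot (MA s) = s"

definition swap_slot :: "nat \<Rightarrow> nat \<Rightarrow> nat" where
  "swap_slot t s = (if s = 1 then t else if s = t then 1 else s)"

fun swap_mark :: "nat \<Rightarrow> mark_idx \<Rightarrow> mark_idx" where
  "swap_mark t (MInd n s) = MInd n (swap_slot t s)"
| "swap_mark t (MG n s) = MG n (swap_slot t s)"
| "swap_mark t (MH s) = MH (swap_slot t s)"
| "swap_mark t (MA s) = MA (swap_slot t s)"

lemma swap_mark_involution [simp]: "swap_mark t (swap_mark t i) = i"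
  by (cases i) (auto simp: swap_slot_def)

lemma bij_swap_mark: "bij (swap_mark t)"
  by (metis bijI' swap_mark_involution)

text \<open>The SIR of slot \<open>t\<close> for the configuration \<open>x\<close> (the enumerated points of \<open>\<Phi>\<close>) and the
  mark vector \<open>m\<close>; the Bernoulli indicators are encoded in \<open>m\<close> as 0/1-valued reals.\<close>

definition sir :: "real \<Rightarrow> real \<Rightarrow> nat \<Rightarrow> (nat \<Rightarrow> real^2) \<Rightarrow> (mark_idx \<Rightarrow> real) \<Rightarrow> ennreal" where
  "sir \<alpha> d t x m = ennreal (d powr (- \<alpha>) * m (MH t)) /
     (\<Sum>n. ennreal (m (MInd n t) * norm (x n) powr (- \<alpha>) * m (MG n t)))"

definition success :: "real \<Rightarrow> real \<Rightarrow> real \<Rightarrow> nat \<Rightarrow> (nat \<Rightarrow> real^2) \<Rightarrow> (mark_idx \<Rightarrow> real) \<Rightarrow> bool" where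
  "success \<alpha> \<beta> d t x m \<longleftrightarrow> m (MA t) = 1 \<and> ennreal \<beta> \<le> sir \<alpha> d t x m"

lemma SIR_eq_sir: "SIR \<alpha> d X Ind G H t \<omega> = sir \<alpha> d t (\<lambda>n. X n \<omega>) (\<lambda>i. mark_vec Ind G H A i \<omega>)"
  by (simp add: SIR_def interference_def sir_def mark_vec_def)

lemma success_swap: "success \<alpha> \<beta> d t x m = success \<alpha> \<beta> d 1 x (\<lambda>i. m (swap_mark t i))"
  by (simp add: success_def sir_def swap_slot_def)

lemma sir_local:
  "(\<And>i. slot i = t \<Longrightarrow> i \<noteq> MA t \<Longrightarrow> m i = m' i) \<Longrightarrow> sir \<alpha> d t x m = sir \<alpha> d t x m'"
  unfolding sir_def by simp

lemma sir_measurable: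
  assumes [measurable]: "\<And>n. (\<lambda>\<omega>. x \<omega> n) \<in> borel_measurable N"
    and marks: "\<And>i. slot i = t \<Longrightarrow> i \<noteq> MA t \<Longrightarrow> (\<lambda>\<omega>. m \<omega> i) \<in> borel_measurable N"
  shows "(\<lambda>\<omega>. sir \<alpha> d t (x \<omega>) (m \<omega>)) \<in> borel_measurable N"
proof -
  have [measurable]: "(\<lambda>\<omega>. m \<omega> (MH t)) \<in> borel_measurable N"
     "\<And>n. (\<lambda>\<omega>. m \<omega> (MInd n t)) \<in> borel_measurable N"
     "\<And>n. (\<lambda>\<omega>. m \<omega> (MG n t)) \<in> borel_measurable N"
    by (auto intro: marks)
  show ?thesis unfolding sir_def by measurable
qed

lemma success_measurable:
  assumes "\<And>n. (\<lambda>\<omega>. x \<omega> n) \<in> borel_measurable N"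
    and "\<And>i. slot i = t \<Longrightarrow> (\<lambda>\<omega>. m \<omega> i) \<in> borel_measurable N"
  shows "(\<lambda>\<omega>. success \<alpha> \<beta> d t (x \<omega>) (m \<omega>)) \<in> measurable N (count_space UNIV)"
proof -
  have [measurable]: "(\<lambda>\<omega>. sir \<alpha> d t (x \<omega>) (m \<omega>)) \<in> borel_measurable N"
    using assms by (intro sir_measurable) auto
  have [measurable]: "(\<lambda>\<omega>. m \<omega> (MA t)) \<in> borel_measurable N"
    using assms by simp
  show ?thesis unfolding success_def by measurable
qed

lemma pair_events_measurable:
  fixes \<alpha> \<beta> d :: real and T :: "nat set"
  shows "finite T \<Longrightarrow> {z. \<forall>t\<in>T. \<not> success \<alpha> \<beta> d t (fst z) (snd z)}
           \<in> sets (PiM UNIV (\<lambda>_. borel) \<Otimes>\<^sub>M PiM UNIV (\<lambda>_. borel))"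
    and "{z. sir \<alpha> d t (fst z) (snd z) < ennreal \<beta>}
           \<in> sets (PiM UNIV (\<lambda>_. borel) \<Otimes>\<^sub>M PiM UNIV (\<lambda>_. borel))"
proof -
  let ?P = "PiM UNIV (\<lambda>_::nat. borel :: (real^2) measure) \<Otimes>\<^sub>M PiM UNIV (\<lambda>_::mark_idx. borel :: real measure)"
  have space: "space ?P = UNIV" by (simp add: space_pair_measure space_PiM)
  have [measurable]: "(\<lambda>z. success \<alpha> \<beta> d t (fst z) (snd z)) \<in> measurable ?P (count_space UNIV)" for t
    by (rule success_measurable) simp_all
  have [measurable]: "(\<lambda>z. sir \<alpha> d t (fst z) (snd z)) \<in> borel_measurable ?P"
    by (rule sir_measurable) simp_all
  show "{z. \<forall>t\<in>T. \<not> success \<alpha> \<beta> d t (fst z) (snd z)} \<in> sets ?P" if "finite T"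
  proof -
    have "{z \<in> space ?P. \<forall>t\<in>T. \<not> success \<alpha> \<beta> d t (fst z) (snd z)} \<in> sets ?P"
      using that by measurable
    then show ?thesis by (simp add: space)
  qed
  have "{z \<in> space ?P. sir \<alpha> d t (fst z) (snd z) < ennreal \<beta>} \<in> sets ?P"
    by measurable
  then show "{z. sir \<alpha> d t (fst z) (snd z) < ennreal \<beta>} \<in> sets ?P"
    by (simp add: space)
qed

section \<open>Failure probabilities for a fixed configuration\<close>

locale iid_marks = prob_space M for M :: "'w measure" +
  fixes p :: real
    and Ind :: "nat \<Rightarrow> nat \<Rightarrow> 'w \<Rightarrow> bool" and G :: "nat \<Rightarrow> nat \<Rightarrow> 'w \<Rightarrow> real"
    and H :: "nat \<Rightarrow> 'w \<Rightarrow> real" and A :: "nat \<Rightarrow> 'w \<Rightarrow> bool"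
  assumes Ind_bernoulli: "\<And>n t. bernoulli_rv M p (Ind n t)"
    and G_exp1: "\<And>n t. exp1_rv M (G n t)"
    and H_exp1: "\<And>t. exp1_rv M (H t)"
    and A_bernoulli: "\<And>t. bernoulli_rv M p (A t)"
    and marks_indep: "indep_vars (\<lambda>_. borel) (mark_vec Ind G H A) UNIV"
begin

abbreviation marks :: "'w \<Rightarrow> mark_idx \<Rightarrow> real" where
  "marks \<omega> \<equiv> \<lambda>i. mark_vec Ind G H A i \<omega>"

lemma mark_measurable [measurable]: "mark_vec Ind G H A i \<in> borel_measurable M"
  using marks_indep by (simp add: indep_vars_def)

lemma marks_MA: "marks \<omega> (MA t) = 1 \<longleftrightarrow> A t \<omega>"
  by (simp add: mark_vec_def)

lemma mark_law_swap: "distr M borel (mark_vec Ind G H A (swap_mark t i)) = distr M borel (mark_vec Ind G H A i)"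
  by (cases i) (auto simp: mark_vec_def[abs_def]
      intro: bernoulli_rv_distr_eq[OF Ind_bernoulli Ind_bernoulli] bernoulli_rv_distr_eq[OF A_bernoulli A_bernoulli]
        exp1_rv_distr_eq[OF G_exp1 G_exp1] exp1_rv_distr_eq[OF H_exp1 H_exp1])

text \<open>All slots fail with the same probability (the marks of slot \<open>t\<close> and of slot 1 are i.i.d.).\<close>

lemma slot_failure_prob:
  "prob {\<omega> \<in> space M. \<not> success \<alpha> \<beta> d t x (marks \<omega>)} = prob {\<omega> \<in> space M. \<not> success \<alpha> \<beta> d 1 x (marks \<omega>)}"
proof -
  have [measurable]: "(\<lambda>m. success \<alpha> \<beta> d 1 x m) \<in> measurable (PiM UNIV (\<lambda>_. borel)) (count_space UNIV)"
    by (rule success_measurable[where x="\<lambda>_. x" and m="\<lambda>m. m"]) (auto intro: measurable_component_singleton)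
  have "{m \<in> space (PiM UNIV (\<lambda>_. borel)). \<not> success \<alpha> \<beta> d 1 x m} \<in> sets (PiM UNIV (\<lambda>_. borel))"
    by measurable
  then have failure_event: "{m. \<not> success \<alpha> \<beta> d 1 x m} \<in> sets (PiM UNIV (\<lambda>_. borel))"
    by (simp add: space_PiM)
  have swap: "success \<alpha> \<beta> d t x (marks \<omega>) \<longleftrightarrow> (\<lambda>i. marks \<omega> (swap_mark t i)) \<in> {m. success \<alpha> \<beta> d 1 x m}" for \<omega>
    using success_swap[of \<alpha> \<beta> d t x "marks \<omega>"] by (simp only: mem_Collect_eq)
  have "prob {\<omega> \<in> space M. (\<lambda>i. marks \<omega> (swap_mark t i)) \<in> {m. \<not> success \<alpha> \<beta> d 1 x m}}
      = prob {\<omega> \<in> space M. marks \<omega> \<in> {m. \<not> success \<alpha> \<beta> d 1 x m}}"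
    by (rule indep_vars_reindex_prob[where Y="mark_vec Ind G H A" and f="swap_mark t"])
      (rule marks_indep bij_swap_mark mark_law_swap failure_event)+
  then show ?thesis
    unfolding swap by (simp only: mem_Collect_eq)
qed

text \<open>Different slots use disjoint blocks of marks, so all slots \<open>1..n\<close> fail with the
  \<open>n\<close>-th power of the failure probability of slot 1.\<close>

lemma all_slots_failure_prob:
  "prob {\<omega> \<in> space M. \<forall>t\<in>{1..n}. \<not> success \<alpha> \<beta> d t x (marks \<omega>)}
     = prob {\<omega> \<in> space M. \<not> success \<alpha> \<beta> d 1 x (marks \<omega>)} ^ n"
proof -
  have "prob {\<omega> \<in> space M. \<forall>t\<in>{1..n}. \<not> success \<alpha> \<beta> d t x (marks \<omega>)}
      = (\<Prod>t\<in>{1..n}. prob {\<omega> \<in> space M. \<not> success \<alpha> \<beta> d t x (marks \<omega>)})"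
  proof (rule indep_vars_prob_blocks[OF marks_indep, where K="\<lambda>t. {i. slot i = t}"])
    show "disjoint_family_on (\<lambda>t. {i. slot i = t}) {1..n}"
      by (auto simp: disjoint_family_on_def)
    fix t
    have [measurable]: "(\<lambda>m. success \<alpha> \<beta> d t x m) \<in> measurable (PiM {i. slot i = t} (\<lambda>_. borel)) (count_space UNIV)"
      by (rule success_measurable[where x="\<lambda>_. x" and m="\<lambda>m. m"]) (auto intro: measurable_component_singleton)
    show "(\<lambda>m. \<not> success \<alpha> \<beta> d t x m) \<in> measurable (PiM {i. slot i = t} (\<lambda>_. borel)) (count_space UNIV)"
      by measurable
    show "(\<not> success \<alpha> \<beta> d t x (restrict m {i. slot i = t})) = (\<not> success \<alpha> \<beta> d t x m)" for m
      unfolding success_def by (subst sir_local[of t _ m]) auto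
  qed (rule finite_atLeastAtMost)
  also have "\<dots> = (\<Prod>t\<in>{1..n}. prob {\<omega> \<in> space M. \<not> success \<alpha> \<beta> d 1 x (marks \<omega>)})"
    by (rule prod.cong[OF refl slot_failure_prob])
  finally show ?thesis by simp
qed

text \<open>The attempt in slot 1 is independent of the SIR of slot 1, which is built from the
  other slot-1 marks only.\<close>

lemma attempt_indep_sir1:
  "prob {\<omega> \<in> space M. A 1 \<omega> \<and> sir \<alpha> d 1 x (marks \<omega>) < ennreal \<beta>}
     = p * prob {\<omega> \<in> space M. sir \<alpha> d 1 x (marks \<omega>) < ennreal \<beta>}"
proof -
  define K where "K b = (if b then {MA 1} else {i. slot i = 1 \<and> i \<noteq> MA 1})" for b
  define P where "P b m = (if b then m (MA 1) = (1::real) else sir \<alpha> d 1 x m < ennreal \<beta>)" for b m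
  have "prob {\<omega> \<in> space M. \<forall>b\<in>UNIV. P b (marks \<omega>)} = (\<Prod>b\<in>UNIV. prob {\<omega> \<in> space M. P b (marks \<omega>)})"
  proof (rule indep_vars_prob_blocks[OF marks_indep])
    show "disjoint_family_on K UNIV"
      by (auto simp: disjoint_family_on_def K_def)
    show "P b \<in> measurable (PiM (K b) (\<lambda>_. borel)) (count_space UNIV)" for b
    proof (cases b)
      case True
      then have "P b = (\<lambda>m. m (MA 1) = 1)" and "K b = {MA 1}"
        by (simp_all add: P_def K_def fun_eq_iff)
      then show ?thesis by simp
    next
      case False
      have [measurable]: "(\<lambda>m. sir \<alpha> d 1 x m) \<in> borel_measurable (PiM (K b) (\<lambda>_. borel))"
        by (rule sir_measurable[where x="\<lambda>_. x" and m="\<lambda>m. m"]) (use False in \<open>auto simp: K_def\<close>)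
      have "P b = (\<lambda>m. sir \<alpha> d 1 x m < ennreal \<beta>)"
        using False by (simp add: P_def fun_eq_iff)
      then show ?thesis by (simp only:) measurable
    qed
    show "P b (restrict m (K b)) = P b m" for b m
    proof (cases b)
      case False
      have "sir \<alpha> d 1 x (restrict m (K b)) = sir \<alpha> d 1 x m"
        by (rule sir_local) (use False in \<open>auto simp: K_def\<close>)
      then show ?thesis using False by (simp add: P_def)
    qed (simp add: P_def K_def)
  qed simp
  then have "prob {\<omega> \<in> space M. P False (marks \<omega>) \<and> P True (marks \<omega>)}
      = prob {\<omega> \<in> space M. P False (marks \<omega>)} * prob {\<omega> \<in> space M. P True (marks \<omega>)}"
    by (simp add: UNIV_bool)
  moreover have "{\<omega> \<in> space M. P False (marks \<omega>) \<and> P True (marks \<omega>)}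
      = {\<omega> \<in> space M. A 1 \<omega> \<and> sir \<alpha> d 1 x (marks \<omega>) < ennreal \<beta>}"
    by (auto simp: P_def marks_MA)
  moreover have "{\<omega> \<in> space M. P True (marks \<omega>)} = {\<omega> \<in> space M. A 1 \<omega>}"
    by (auto simp: P_def marks_MA)
  moreover have "{\<omega> \<in> space M. P False (marks \<omega>)} = {\<omega> \<in> space M. sir \<alpha> d 1 x (marks \<omega>) < ennreal \<beta>}"
    by (simp add: P_def)
  ultimately show ?thesis
    using bernoulli_rv_prob(1)[OF A_bernoulli, of 1] by (simp add: mult.commute)
qed

text \<open>Slot 1 fails if there is no attempt, or if there is an attempt but the SIR is below
  the threshold.\<close>

lemma slot1_failure_prob:
  "prob {\<omega> \<in> space M. \<not> success \<alpha> \<beta> d 1 x (marks \<omega>)}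
     = (1 - p) + p * prob {\<omega> \<in> space M. sir \<alpha> d 1 x (marks \<omega>) < ennreal \<beta>}"
proof -
  have [measurable]: "A 1 \<in> measurable M (count_space UNIV)"
    using A_bernoulli by (simp add: bernoulli_rv_def)
  have [measurable]: "(\<lambda>\<omega>. sir \<alpha> d 1 x (marks \<omega>)) \<in> borel_measurable M"
    by (rule sir_measurable) simp_all
  have no_attempt_event: "{\<omega> \<in> space M. \<not> A 1 \<omega>} \<in> events"
    and attempt_below_event: "{\<omega> \<in> space M. A 1 \<omega> \<and> sir \<alpha> d 1 x (marks \<omega>) < ennreal \<beta>} \<in> events"
    by measurable
  have "{\<omega> \<in> space M. \<not> success \<alpha> \<beta> d 1 x (marks \<omega>)}
      = {\<omega> \<in> space M. \<not> A 1 \<omega>} \<union> {\<omega> \<in> space M. A 1 \<omega> \<and> sir \<alpha> d 1 x (marks \<omega>) < ennreal \<beta>}"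
    by (auto simp: success_def marks_MA not_le)
  also have "prob \<dots> = prob {\<omega> \<in> space M. \<not> A 1 \<omega>} + prob {\<omega> \<in> space M. A 1 \<omega> \<and> sir \<alpha> d 1 x (marks \<omega>) < ennreal \<beta>}"
    by (rule finite_measure_Union[OF no_attempt_event attempt_below_event]) auto
  finally show ?thesis
    using attempt_indep_sir1 bernoulli_rv_prob(2)[OF A_bernoulli, of 1] by simp
qed

text \<open>The per-configuration failure probabilities are
  integrated over the law of \<open>Y\<close>, with Jensen's inequality for the \<open>n\<close>-th power.\<close>

lemma success_prob_bound:
  assumes indep: "indep_rv M (PiM UNIV (\<lambda>_. borel)) Y (PiM UNIV (\<lambda>_. borel)) marks"
  shows "prob {\<omega> \<in> space M. \<exists>t\<in>{1..n}. success \<alpha> \<beta> d t (Y \<omega>) (marks \<omega>)}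
      \<le> 1 - (p * prob {\<omega> \<in> space M. sir \<alpha> d 1 (Y \<omega>) (marks \<omega>) < ennreal \<beta>} + 1 - p) ^ n"
proof -
  define all_fail where "all_fail = {z. \<forall>t\<in>{1..n}. \<not> success \<alpha> \<beta> d t (fst z) (snd z)}"
  define fail1 where "fail1 = {z. \<forall>t\<in>{1}. \<not> success \<alpha> \<beta> d t (fst z) (snd z)}"
  define below where "below = {z. sir \<alpha> d 1 (fst z) (snd z) < ennreal \<beta>}"
  let ?pair_events = "sets (PiM UNIV (\<lambda>_. borel) \<Otimes>\<^sub>M PiM UNIV (\<lambda>_. borel))"
  have all_fail_event: "all_fail \<in> ?pair_events"
    unfolding all_fail_def by (rule pair_events_measurable) simp
  have fail1_event: "fail1 \<in> ?pair_events"
    unfolding fail1_def by (rule pair_events_measurable) simp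
  have below_event: "below \<in> ?pair_events"
    unfolding below_def by (rule pair_events_measurable(2))
  have fail1_section: "prob {\<omega> \<in> space M. (x, marks \<omega>) \<in> fail1}
      = (1 - p) + p * prob {\<omega> \<in> space M. (x, marks \<omega>) \<in> below}" for x
    using slot1_failure_prob[where x=x] by (simp add: fail1_def below_def)
  have all_fail_section: "prob {\<omega> \<in> space M. (x, marks \<omega>) \<in> all_fail}
      = prob {\<omega> \<in> space M. (x, marks \<omega>) \<in> fail1} ^ n" for x
    using all_slots_failure_prob[where n=n and x=x] by (simp add: fail1_def all_fail_def)
  have "prob {\<omega> \<in> space M. (Y \<omega>, marks \<omega>) \<in> fail1}
      = p * prob {\<omega> \<in> space M. (Y \<omega>, marks \<omega>) \<in> below} + 1 - p"
    using indep_rv_section_affine[OF indep fail1_event below_event fail1_section] by simp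
  moreover have "prob {\<omega> \<in> space M. (Y \<omega>, marks \<omega>) \<in> fail1} ^ n
      \<le> prob {\<omega> \<in> space M. (Y \<omega>, marks \<omega>) \<in> all_fail}"
    by (rule indep_rv_section_power_bound[OF indep all_fail_event fail1_event all_fail_section])
  moreover have "{\<omega> \<in> space M. \<exists>t\<in>{1..n}. success \<alpha> \<beta> d t (Y \<omega>) (marks \<omega>)}
      = space M - {\<omega> \<in> space M. (Y \<omega>, marks \<omega>) \<in> all_fail}"
    by (auto simp: all_fail_def)
  moreover have "{\<omega> \<in> space M. (Y \<omega>, marks \<omega>) \<in> all_fail} \<in> events"
    using indep all_fail_event unfolding indep_rv_def by (auto intro: measurable_sets_Collect)
  ultimately show ?thesis
    by (simp add: prob_compl below_def)
qed

end

theorem proposition3: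
  fixes M :: "'w measure"
    and \<alpha> \<beta> d p lam :: real and D :: nat
    and X :: "nat \<Rightarrow> 'w \<Rightarrow> real^2"
    and Ind :: "nat \<Rightarrow> nat \<Rightarrow> 'w \<Rightarrow> bool"
    and G :: "nat \<Rightarrow> nat \<Rightarrow> 'w \<Rightarrow> real"
    and H :: "nat \<Rightarrow> 'w \<Rightarrow> real"
    and A :: "nat \<Rightarrow> 'w \<Rightarrow> bool"
  assumes "prob_space M"
    and "\<alpha> > 2" and "\<beta> > 0" and "d > 0" and "0 < p" and "p \<le> 1" and "lam > 0"
    and "poisson_pp M lam X"
    and "\<And>n t. bernoulli_rv M p (Ind n t)"
    and "\<And>n t. exp1_rv M (G n t)"
    and "\<And>t. exp1_rv M (H t)"
    and "\<And>t. bernoulli_rv M p (A t)"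
    and "prob_space.indep_vars M (\<lambda>_. borel) (mark_vec Ind G H A) UNIV"
    and "indep_rv M (PiM UNIV (\<lambda>_. borel)) (\<lambda>\<omega> n. X n \<omega>)
           (PiM UNIV (\<lambda>_. borel)) (\<lambda>\<omega> i. mark_vec Ind G H A i \<omega>)"
  shows "measure M {\<omega> \<in> space M. \<exists>t \<in> {1..D+1}. A t \<omega> \<and> SIR \<alpha> d X Ind G H t \<omega> \<ge> ennreal \<beta>}
         \<le> 1 - (p * measure M {\<omega> \<in> space M. SIR \<alpha> d X Ind G H 1 \<omega> < ennreal \<beta>} + 1 - p) ^ (D + 1)"
proof -
  interpret iid_marks M p Ind G H A
    by (intro iid_marks.intro iid_marks_axioms.intro) fact+
  have "{\<omega> \<in> space M. \<exists>t \<in> {1..D+1}. A t \<omega> \<and> SIR \<alpha> d X Ind G H t \<omega> \<ge> ennreal \<beta>}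
      = {\<omega> \<in> space M. \<exists>t\<in>{1..D+1}. success \<alpha> \<beta> d t (\<lambda>n. X n \<omega>) (marks \<omega>)}"
    by (simp add: success_def marks_MA SIR_eq_sir[where A=A])
  with success_prob_bound[OF \<open>indep_rv M _ (\<lambda>\<omega> n. X n \<omega>) _ marks\<close>, where n="D + 1"]
  show ?thesis
    by (simp add: SIR_eq_sir[where A=A])
qed

end
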